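(* Let $\varphi$ be an endomorphism of an abelian group $A$. Suppose that either there is a $\varphi$-invariant subgroup $A_0$ of finite index in $A$ such that the restriction of $\varphi$ to $A_0$ is inertial (resp. left-inertial), or there is a finite $\varphi$-invariant subgroup $F$ of $A$ such that the endomorphism of $A/F$ induced by $\varphi$ is inertial (resp. left-inertial). Then $\varphi$ is inertial (resp. left-inertial) on $A$.
   Context: Abelian groups are written additively. An endomorphism $\varphi$ of $A$ is inertial if $(\varphi(X)+X)/X$ is finite for every subgroup $X\le A$, and left-inertial if $X/(X\cap\varphi(X))$ is finite for every $X\le A$. *)

theory Defs
  imports "HOL-Algebra.Algebra"
begin

text \<open>Abelian groups are modelled as HOL-Algebra commutative groups (written
multiplicatively). For subgroups X \<subseteq> Y, finiteness of Y/X is finiteness of the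
set of cosets S y, y in Y.\<close>

definition inertial :: "('a, 'b) monoid_scheme \<Rightarrow> ('a \<Rightarrow> 'a) \<Rightarrow> bool" where
  "inertial H f \<longleftrightarrow>
     (\<forall>S. subgroup S H \<longrightarrow>
        finite ((\<lambda>y. r_coset H S y) ` (set_mult H (f ` S) S)))"

definition left_inertial :: "('a, 'b) monoid_scheme \<Rightarrow> ('a \<Rightarrow> 'a) \<Rightarrow> bool" where
  "left_inertial H f \<longleftrightarrow>
     (\<forall>S. subgroup S H \<longrightarrow>
        finite ((\<lambda>y. r_coset H (S \<inter> f ` S) y) ` S))"

text \<open>Endomorphism of G Mod F induced by f (for f(F) \<subseteq> F): the coset F a is
sent to F f(a), computed choice-free as F \<cdot> f(C).\<close>

definition induced_quot :: "('a, 'b) monoid_scheme \<Rightarrow> 'a set \<Rightarrow> ('a \<Rightarrow> 'a) \<Rightarrow> 'a set \<Rightarrow> 'a set" where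
  "induced_quot G F f C = set_mult G F (f ` C)"

end

theory Submission
  imports Defs
begin

text \<open>For subgroups X \<le> Y, the index of X in Y is finite iff Y \<subseteq> X T for a finite set T.
If A0 has finite index, every subgroup K contains K0 = K \<inter> A0 with finite index, so a finite
cover of \<phi>(K0) K0 (resp. K0) by cosets of K0 (resp. K0 \<inter> \<phi>(K0)) extends to one of \<phi>(K) K
(resp. K) after multiplying by finitely many representatives of K/K0. If F is finite, a cover in
A/F pulls back to a cover up to F, and F is absorbed into the finite set of representatives;
for left inertia one also needs that FK \<inter> F\<phi>(K) is covered by finitely many cosets of
K \<inter> \<phi>(K), at most one for each pair of elements of F.\<close>

lemma finite_set_mult: "finite H \<Longrightarrow> finite K \<Longrightarrow> finite (H <#>\<^bsub>G\<^esub> K)"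
  unfolding set_mult_def by simp

lemma (in comm_group) set_mult_comm:
  "H \<subseteq> carrier G \<Longrightarrow> K \<subseteq> carrier G \<Longrightarrow> H <#> K = K <#> H"
  unfolding set_mult_def by (auto; metis m_comm subsetD)

lemma (in comm_group) set_mult_interchange:
  assumes "A \<subseteq> carrier G" "B \<subseteq> carrier G" "C \<subseteq> carrier G" "D \<subseteq> carrier G"
  shows "(A <#> B) <#> (C <#> D) = (A <#> C) <#> (B <#> D)"
proof -
  have "(A <#> B) <#> (C <#> D) = A <#> ((B <#> C) <#> D)"
    using assms by (simp add: set_mult_assoc setmult_subset_G)
  also have "\<dots> = A <#> ((C <#> B) <#> D)" using assms by (simp add: set_mult_comm)
  also have "\<dots> = (A <#> C) <#> (B <#> D)"
    using assms by (simp add: set_mult_assoc setmult_subset_G)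
  finally show ?thesis .
qed

lemma (in group) inv_mult_cancel_left:
  "f \<in> carrier G \<Longrightarrow> a \<in> carrier G \<Longrightarrow> b \<in> carrier G \<Longrightarrow> inv (f \<otimes> a) \<otimes> (f \<otimes> b) = inv a \<otimes> b"
  by (simp add: inv_mult_group m_assoc) (simp add: m_assoc[symmetric])

lemma (in group) finite_rcosets_image_imp_cover:
  assumes "subgroup K G" "M \<subseteq> carrier G" "finite ((\<lambda>y. K #> y) ` M)"
  obtains T where "finite T" "T \<subseteq> M" "M \<subseteq> K <#> T"
proof -
  obtain T where T: "T \<subseteq> M" "finite T" "(\<lambda>y. K #> y) ` M = (\<lambda>y. K #> y) ` T"
    using finite_subset_image[OF assms(3) subset_refl] by metis
  have "M \<subseteq> K <#> T"
  proof
    fix y assume y: "y \<in> M"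
    then obtain t where t: "t \<in> T" "K #> y = K #> t" using T(3) by blast
    have "y \<in> K #> t" using rcos_self[of y K] assms y t by auto
    with t(1) show "y \<in> K <#> T" unfolding r_coset_def set_mult_def by auto
  qed
  with T that show ?thesis by blast
qed

lemma (in group) finite_rcosets_image_if_cover:
  assumes "subgroup K G" "finite T" "T \<subseteq> carrier G" "M \<subseteq> K <#> T"
  shows "finite ((\<lambda>y. K #> y) ` M)"
proof -
  have "(\<lambda>y. K #> y) ` M \<subseteq> (\<lambda>y. K #> y) ` T"
  proof
    fix c assume "c \<in> (\<lambda>y. K #> y) ` M"
    then obtain k t where "k \<in> K" "t \<in> T" "c = K #> (k \<otimes> t)"
      using assms(4) unfolding set_mult_def by blast
    moreover have "k \<otimes> t \<in> K #> t" using \<open>k \<in> K\<close> unfolding r_coset_def by blast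
    ultimately show "c \<in> (\<lambda>y. K #> y) ` T"
      using repr_independence[OF _ _ assms(1)] assms(3) by blast
  qed
  then show ?thesis using assms(2) finite_subset by blast
qed

lemma (in group) finite_index_Int_cover:
  assumes "subgroup A G" "finite (rcosets A)" "subgroup K G"
  obtains T where "finite T" "T \<subseteq> K" "K \<subseteq> (K \<inter> A) <#> T"
proof -
  have "(\<lambda>y. A #> y) ` K \<subseteq> rcosets A"
    using subgroup.subset[OF assms(3)] unfolding RCOSETS_def by blast
  then obtain T where T: "finite T" "T \<subseteq> K" "K \<subseteq> A <#> T"
    using finite_rcosets_image_imp_cover[OF assms(1) subgroup.subset[OF assms(3)]]
      finite_subset[OF _ assms(2)] by metis
  have "K \<subseteq> (K \<inter> A) <#> T"
  proof
    fix k assume k: "k \<in> K"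
    then obtain a t where at: "a \<in> A" "t \<in> T" "k = a \<otimes> t"
      using T(3) unfolding set_mult_def by blast
    have t: "t \<in> K" "t \<in> carrier G" using at(2) T(2) subgroup.subset[OF assms(3)] by auto
    have "a = k \<otimes> inv t"
      using at subgroup.mem_carrier[OF assms(1)] t by (simp add: m_assoc)
    then have "a \<in> K" using k t(1) assms(3) by (simp add: subgroup.m_closed subgroup.m_inv_closed)
    with at show "k \<in> (K \<inter> A) <#> T" unfolding set_mult_def by blast
  qed
  with T that show ?thesis by blast
qed

lemma (in group) Int_set_mult_finite_cover:
  assumes K: "subgroup K G" and H: "subgroup H G" and F: "finite F" "F \<subseteq> carrier G"
  obtains R where "finite R" "R \<subseteq> carrier G" "(F <#> K) \<inter> (F <#> H) \<subseteq> R <#> (K \<inter> H)"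
proof -
  txt \<open>Each nonempty P (f, f') = f K \<inter> f' H is a left coset of K \<inter> H, so one chosen
    element per pair (f, f') suffices.\<close>
  define P where "P p = {x. \<exists>k\<in>K. \<exists>h\<in>H. x = fst p \<otimes> k \<and> x = snd p \<otimes> h}" for p
  define R where "R = (\<lambda>p. SOME r. r \<in> P p) ` {p \<in> F \<times> F. P p \<noteq> {}}"
  have P_carrier: "P p \<subseteq> carrier G" if "p \<in> F \<times> F" for p
    using that F(2) subgroup.mem_carrier[OF K] unfolding P_def by fastforce
  have inv_mult_in_Int: "inv r \<otimes> x \<in> K \<inter> H" if "r \<in> P p" "x \<in> P p" "p \<in> F \<times> F" for r x p
  proof -
    obtain k k' h h' where kh: "k \<in> K" "k' \<in> K" "h \<in> H" "h' \<in> H"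
      "r = fst p \<otimes> k'" "x = fst p \<otimes> k" "r = snd p \<otimes> h'" "x = snd p \<otimes> h"
      using \<open>r \<in> P p\<close> \<open>x \<in> P p\<close> unfolding P_def by blast
    have c: "fst p \<in> carrier G" "snd p \<in> carrier G" "k \<in> carrier G" "k' \<in> carrier G"
      "h \<in> carrier G" "h' \<in> carrier G"
      using that(3) kh(1-4) F(2) subgroup.mem_carrier[OF K] subgroup.mem_carrier[OF H] by auto
    have "inv r \<otimes> x = inv k' \<otimes> k"
      unfolding kh(5,6) using c(1,4,3) by (rule inv_mult_cancel_left)
    moreover have "inv r \<otimes> x = inv h' \<otimes> h"
      unfolding kh(7,8) using c(2,6,5) by (rule inv_mult_cancel_left)
    moreover have "inv k' \<otimes> k \<in> K" "inv h' \<otimes> h \<in> H"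
      using kh K H by (simp_all add: subgroup.m_closed subgroup.m_inv_closed)
    ultimately show ?thesis by (metis IntI)
  qed
  have "finite R"
    unfolding R_def using F(1) by simp
  moreover have "R \<subseteq> carrier G"
    unfolding R_def using P_carrier some_in_eq by blast
  moreover have "(F <#> K) \<inter> (F <#> H) \<subseteq> R <#> (K \<inter> H)"
  proof
    fix x assume "x \<in> (F <#> K) \<inter> (F <#> H)"
    then obtain p where p: "p \<in> F \<times> F" "x \<in> P p"
      unfolding P_def set_mult_def by force
    define r where "r = (SOME r. r \<in> P p)"
    have r: "r \<in> P p" unfolding r_def using p(2) by (rule someI)
    have "r \<in> R" unfolding R_def r_def using p by blast
    moreover have "x = r \<otimes> (inv r \<otimes> x)"
      using P_carrier[OF p(1)] r p(2) by (simp add: m_assoc[symmetric] subset_iff)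
    ultimately show "x \<in> R <#> (K \<inter> H)"
      using inv_mult_in_Int[OF r p(2,1)] unfolding set_mult_def by blast
  qed
  ultimately show ?thesis by (rule that)
qed

lemma (in group) endo_group_hom: "\<phi> \<in> hom G G \<Longrightarrow> group_hom G G \<phi>"
  by (intro group_hom.intro group_hom_axioms.intro is_group)

lemma (in comm_group) rcoset_group_hom:
  assumes "subgroup F G"
  shows "group_hom G (G Mod F) (\<lambda>a. F #> a)"
proof -
  have "F \<lhd> G" using assms by (rule subgroup_imp_normal)
  then show ?thesis
    by (intro group_hom.intro group_hom_axioms.intro is_group normal.factorgroup_is_group
        normal.r_coset_hom_Mod)
qed

lemma (in group_hom) finite_rcosets_image_lift_cover:
  assumes L: "subgroup L H" and M: "M \<subseteq> carrier G" "h ` M \<subseteq> N"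
    and fin: "finite ((\<lambda>Y. L #>\<^bsub>H\<^esub> Y) ` N)"
  obtains T where "finite T" "T \<subseteq> carrier G" "M \<subseteq> {x \<in> carrier G. h x \<in> L} <#> T"
proof -
  have "h ` M \<subseteq> carrier H" using M(1) by auto
  moreover have "finite ((\<lambda>Y. L #>\<^bsub>H\<^esub> Y) ` h ` M)"
    by (rule finite_subset[OF image_mono[OF M(2)] fin])
  ultimately obtain TT where TT: "finite TT" "TT \<subseteq> h ` M" "h ` M \<subseteq> L <#>\<^bsub>H\<^esub> TT"
    by (rule H.finite_rcosets_image_imp_cover[OF L])
  obtain T where T: "T \<subseteq> M" "finite T" "TT = h ` T"
    using finite_subset_image[OF TT(1,2)] by blast
  have "M \<subseteq> {x \<in> carrier G. h x \<in> L} <#> T"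
  proof
    fix y assume y: "y \<in> M"
    then obtain l t where lt: "l \<in> L" "t \<in> T" "h y = l \<otimes>\<^bsub>H\<^esub> h t"
      using TT(3) T(3) unfolding set_mult_def by blast
    have c: "y \<in> carrier G" "t \<in> carrier G" "l \<in> carrier H"
      using y lt T(1) M(1) subgroup.mem_carrier[OF L] by auto
    have "h (y \<otimes> inv t) = (l \<otimes>\<^bsub>H\<^esub> h t) \<otimes>\<^bsub>H\<^esub> inv\<^bsub>H\<^esub> h t"
      using c by (simp add: lt(3)[symmetric])
    also have "\<dots> = l" using c by (simp add: H.m_assoc)
    finally have "y \<otimes> inv t \<in> {x \<in> carrier G. h x \<in> L}" using c lt(1) by simp
    moreover have "y = (y \<otimes> inv t) \<otimes> t" using c by (simp add: G.m_assoc)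
    ultimately show "y \<in> {x \<in> carrier G. h x \<in> L} <#> T"
      using lt(2) unfolding set_mult_def by blast
  qed
  with T(1,2) M(1) show ?thesis by (intro that) auto
qed

lemma (in group) rcoset_preimage_subset:
  assumes "subgroup F G"
  shows "{x \<in> carrier G. F #> x \<in> (\<lambda>a. F #> a) ` K} \<subseteq> F <#> K"
proof
  fix x assume "x \<in> {x \<in> carrier G. F #> x \<in> (\<lambda>a. F #> a) ` K}"
  then obtain k where "x \<in> carrier G" "k \<in> K" "F #> x = F #> k" by blast
  then have "x \<in> F #> k" using rcos_self assms by metis
  with \<open>k \<in> K\<close> show "x \<in> F <#> K" unfolding r_coset_def set_mult_def by blast
qed

lemma (in group) induced_quot_rcoset:
  assumes hom: "\<phi> \<in> hom G G" and F: "subgroup F G" "\<phi> ` F \<subseteq> F" and x: "x \<in> carrier G"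
  shows "induced_quot G F \<phi> (F #> x) = F #> \<phi> x"
  unfolding induced_quot_def
proof
  show "F <#> \<phi> ` (F #> x) \<subseteq> F #> \<phi> x"
  proof
    fix z assume "z \<in> F <#> \<phi> ` (F #> x)"
    then obtain f f' where ff: "f \<in> F" "f' \<in> F" "z = f \<otimes> \<phi> (f' \<otimes> x)"
      unfolding set_mult_def r_coset_def by blast
    have c: "f \<in> carrier G" "f' \<in> carrier G" "\<phi> f' \<in> carrier G" "\<phi> x \<in> carrier G"
      using ff x subgroup.mem_carrier[OF F(1)] hom by (auto simp: hom_def Pi_def)
    have "z = (f \<otimes> \<phi> f') \<otimes> \<phi> x" using ff c x hom_mult[OF hom] by (simp add: m_assoc)
    moreover have "f \<otimes> \<phi> f' \<in> F" using ff F by (auto intro: subgroup.m_closed)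
    ultimately show "z \<in> F #> \<phi> x" unfolding r_coset_def by blast
  qed
  show "F #> \<phi> x \<subseteq> F <#> \<phi> ` (F #> x)"
    using rcos_self[OF x F(1)] unfolding r_coset_def set_mult_def by blast
qed

lemma (in group) induced_quot_image_rcosets:
  assumes "\<phi> \<in> hom G G" "subgroup F G" "\<phi> ` F \<subseteq> F" "K \<subseteq> carrier G"
  shows "induced_quot G F \<phi> ` (\<lambda>a. F #> a) ` K = (\<lambda>a. F #> a) ` \<phi> ` K"
  unfolding image_image
  by (rule image_cong[OF refl induced_quot_rcoset[OF assms(1-3)]]) (use assms(4) in blast)

lemma (in comm_group) inertial_if_finite_index_inertial:
  assumes hom: "\<phi> \<in> hom G G" and A: "subgroup A G" "finite (rcosets A)"
    and inert: "inertial (G\<lparr>carrier := A\<rparr>) \<phi>"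
  shows "inertial G \<phi>"
  unfolding inertial_def
proof (intro allI impI)
  fix K assume K: "subgroup K G"
  define K0 where "K0 = K \<inter> A"
  have K0: "subgroup K0 G" unfolding K0_def using subgroups_Inter_pair K A(1) by blast
  have K0A: "subgroup K0 (G\<lparr>carrier := A\<rparr>)" using subgroup_incl[OF K0 A(1)] K0_def by blast
  have phi_carrier: "\<phi> ` S \<subseteq> carrier G" if "S \<subseteq> carrier G" for S
    using that hom by (auto simp: hom_def Pi_def)
  have K0c: "K0 \<subseteq> carrier G" by (rule subgroup.subset[OF K0])
  obtain T0 where T0: "finite T0" "T0 \<subseteq> K" "K \<subseteq> K0 <#> T0"
    using finite_index_Int_cover[OF A(1) A(2) K] unfolding K0_def by blast
  have T0c: "T0 \<subseteq> carrier G" using T0(2) subgroup.subset[OF K] by blast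
  have "finite ((\<lambda>y. K0 #> y) ` (\<phi> ` K0 <#> K0))"
    using inert K0A unfolding inertial_def by simp
  then obtain T1 where T1: "finite T1" "T1 \<subseteq> \<phi> ` K0 <#> K0" "\<phi> ` K0 <#> K0 \<subseteq> K0 <#> T1"
    using finite_rcosets_image_imp_cover[OF K0 set_mult_closed[OF phi_carrier K0c]] K0c by metis
  have T1c: "T1 \<subseteq> carrier G" using T1(2) set_mult_closed[OF phi_carrier K0c] K0c by blast
  have phiT0c: "\<phi> ` T0 <#> T0 \<subseteq> carrier G" using phi_carrier[OF T0c] T0c by (rule set_mult_closed)
  have "\<phi> ` K <#> K \<subseteq> \<phi> ` (K0 <#> T0) <#> (K0 <#> T0)"
    using T0(3) by (intro mono_set_mult image_mono)
  also have "\<dots> = (\<phi> ` K0 <#> \<phi> ` T0) <#> (K0 <#> T0)"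
    by (simp only: set_mult_hom[OF hom K0c T0c])
  also have "\<dots> = (\<phi> ` K0 <#> K0) <#> (\<phi> ` T0 <#> T0)"
    by (rule set_mult_interchange[OF phi_carrier[OF K0c] phi_carrier[OF T0c] K0c T0c])
  also have "\<dots> \<subseteq> (K0 <#> T1) <#> (\<phi> ` T0 <#> T0)"
    using T1(3) by (rule mono_set_mult) simp
  also have "\<dots> = K0 <#> (T1 <#> (\<phi> ` T0 <#> T0))"
    by (rule set_mult_assoc[OF K0c T1c phiT0c])
  also have "\<dots> \<subseteq> K <#> (T1 <#> (\<phi> ` T0 <#> T0))"
    unfolding K0_def by (intro mono_set_mult) auto
  finally have cover: "\<phi> ` K <#> K \<subseteq> K <#> (T1 <#> (\<phi> ` T0 <#> T0))" .
  have "finite (T1 <#> (\<phi> ` T0 <#> T0))" using T0(1) T1(1) by (simp add: finite_set_mult)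
  from finite_rcosets_image_if_cover[OF K this set_mult_closed[OF T1c phiT0c] cover]
  show "finite ((\<lambda>y. K #> y) ` (\<phi> ` K <#> K))" .
qed

lemma (in comm_group) left_inertial_if_finite_index_left_inertial:
  assumes hom: "\<phi> \<in> hom G G" and A: "subgroup A G" "finite (rcosets A)"
    and inert: "left_inertial (G\<lparr>carrier := A\<rparr>) \<phi>"
  shows "left_inertial G \<phi>"
  unfolding left_inertial_def
proof (intro allI impI)
  fix K assume K: "subgroup K G"
  interpret \<phi>: group_hom G G \<phi> using hom by (rule endo_group_hom)
  define K0 where "K0 = K \<inter> A"
  have K0: "subgroup K0 G" unfolding K0_def using subgroups_Inter_pair K A(1) by blast
  have K0A: "subgroup K0 (G\<lparr>carrier := A\<rparr>)" using subgroup_incl[OF K0 A(1)] K0_def by blast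
  have K0c: "K0 \<subseteq> carrier G" by (rule subgroup.subset[OF K0])
  have KK0: "subgroup (K0 \<inter> \<phi> ` K0) G" by (rule subgroups_Inter_pair[OF K0 \<phi>.subgroup_img_is_subgroup[OF K0]])
  have KK: "subgroup (K \<inter> \<phi> ` K) G" by (rule subgroups_Inter_pair[OF K \<phi>.subgroup_img_is_subgroup[OF K]])
  obtain T0 where T0: "finite T0" "T0 \<subseteq> K" "K \<subseteq> K0 <#> T0"
    using finite_index_Int_cover[OF A(1) A(2) K] unfolding K0_def by blast
  have T0c: "T0 \<subseteq> carrier G" using T0(2) subgroup.subset[OF K] by blast
  have "finite ((\<lambda>y. (K0 \<inter> \<phi> ` K0) #> y) ` K0)"
    using inert K0A unfolding left_inertial_def by simp
  then obtain T1 where T1: "finite T1" "T1 \<subseteq> K0" "K0 \<subseteq> (K0 \<inter> \<phi> ` K0) <#> T1"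
    by (rule finite_rcosets_image_imp_cover[OF KK0 K0c])
  have T1c: "T1 \<subseteq> carrier G" using T1(2) K0c by blast
  have "K \<subseteq> ((K0 \<inter> \<phi> ` K0) <#> T1) <#> T0"
    using T0(3) mono_set_mult[OF T1(3) subset_refl] by (rule order_trans)
  also have "\<dots> = (K0 \<inter> \<phi> ` K0) <#> (T1 <#> T0)"
    using K0c by (intro set_mult_assoc T1c T0c) blast
  also have "\<dots> \<subseteq> (K \<inter> \<phi> ` K) <#> (T1 <#> T0)"
    unfolding K0_def by (intro mono_set_mult) auto
  finally have cover: "K \<subseteq> (K \<inter> \<phi> ` K) <#> (T1 <#> T0)" .
  have "finite (T1 <#> T0)" using T0(1) T1(1) by (simp add: finite_set_mult)
  from finite_rcosets_image_if_cover[OF KK this set_mult_closed[OF T1c T0c] cover]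
  show "finite ((\<lambda>y. (K \<inter> \<phi> ` K) #> y) ` K)" .
qed

lemma (in comm_group) inertial_if_inertial_mod_finite:
  assumes hom: "\<phi> \<in> hom G G" and F: "subgroup F G" "finite F" "\<phi> ` F \<subseteq> F"
    and inert: "inertial (G Mod F) (induced_quot G F \<phi>)"
  shows "inertial G \<phi>"
  unfolding inertial_def
proof (intro allI impI)
  fix K assume K: "subgroup K G"
  interpret \<pi>: group_hom G "G Mod F" "\<lambda>a. F #> a" using F(1) by (rule rcoset_group_hom)
  interpret \<phi>: group_hom G G \<phi> using hom by (rule endo_group_hom)
  have Kc: "K \<subseteq> carrier G" by (rule subgroup.subset[OF K])
  have \<phi>Kc: "\<phi> ` K \<subseteq> carrier G" using Kc by auto
  have Fc: "F \<subseteq> carrier G" by (rule subgroup.subset[OF F(1)])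
  note ind = induced_quot_image_rcosets[OF hom F(1,3) Kc]
  have \<pi>K: "subgroup ((\<lambda>a. F #> a) ` K) (G Mod F)" by (rule \<pi>.subgroup_img_is_subgroup[OF K])
  have fin: "finite ((\<lambda>Y. (\<lambda>a. F #> a) ` K #>\<^bsub>G Mod F\<^esub> Y) `
      ((\<lambda>a. F #> a) ` \<phi> ` K <#>\<^bsub>G Mod F\<^esub> (\<lambda>a. F #> a) ` K))"
    using inert[unfolded inertial_def, rule_format, OF \<pi>K] by (simp only: ind)
  have "(\<lambda>a. F #> a) ` (\<phi> ` K <#> K) = (\<lambda>a. F #> a) ` \<phi> ` K <#>\<^bsub>G Mod F\<^esub> (\<lambda>a. F #> a) ` K"
    by (rule set_mult_hom[OF \<pi>.homh \<phi>Kc Kc])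
  then obtain T where T: "finite T" "T \<subseteq> carrier G"
    "\<phi> ` K <#> K \<subseteq> {x \<in> carrier G. F #> x \<in> (\<lambda>a. F #> a) ` K} <#> T"
    using \<pi>.finite_rcosets_image_lift_cover[OF \<pi>K set_mult_closed[OF \<phi>Kc Kc] _ fin] by auto
  note this(3)
  also have "{x \<in> carrier G. F #> x \<in> (\<lambda>a. F #> a) ` K} <#> T \<subseteq> (F <#> K) <#> T"
    using rcoset_preimage_subset[OF F(1)] by (rule mono_set_mult) simp
  also have "\<dots> = K <#> (F <#> T)"
    using set_mult_comm[OF Fc Kc] set_mult_assoc[OF Kc Fc T(2)] by simp
  finally have cover: "\<phi> ` K <#> K \<subseteq> K <#> (F <#> T)" .
  have "finite (F <#> T)" using F(2) T(1) by (simp add: finite_set_mult)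
  from finite_rcosets_image_if_cover[OF K this set_mult_closed[OF Fc T(2)] cover]
  show "finite ((\<lambda>y. K #> y) ` (\<phi> ` K <#> K))" .
qed

lemma (in comm_group) left_inertial_if_left_inertial_mod_finite:
  assumes hom: "\<phi> \<in> hom G G" and F: "subgroup F G" "finite F" "\<phi> ` F \<subseteq> F"
    and inert: "left_inertial (G Mod F) (induced_quot G F \<phi>)"
  shows "left_inertial G \<phi>"
  unfolding left_inertial_def
proof (intro allI impI)
  fix K assume K: "subgroup K G"
  interpret \<pi>: group_hom G "G Mod F" "\<lambda>a. F #> a" using F(1) by (rule rcoset_group_hom)
  interpret \<phi>: group_hom G G \<phi> using hom by (rule endo_group_hom)
  have Kc: "K \<subseteq> carrier G" by (rule subgroup.subset[OF K])
  have Fc: "F \<subseteq> carrier G" by (rule subgroup.subset[OF F(1)])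
  have \<phi>K: "subgroup (\<phi> ` K) G" by (rule \<phi>.subgroup_img_is_subgroup[OF K])
  have KK: "subgroup (K \<inter> \<phi> ` K) G" by (rule subgroups_Inter_pair[OF K \<phi>K])
  note ind = induced_quot_image_rcosets[OF hom F(1,3) Kc]
  have \<pi>KK: "subgroup ((\<lambda>a. F #> a) ` K \<inter> (\<lambda>a. F #> a) ` \<phi> ` K) (G Mod F)"
    by (rule group.subgroups_Inter_pair[OF \<pi>.H.is_group
          \<pi>.subgroup_img_is_subgroup[OF K] \<pi>.subgroup_img_is_subgroup[OF \<phi>K]])
  have "finite ((\<lambda>Y. ((\<lambda>a. F #> a) ` K \<inter> (\<lambda>a. F #> a) ` \<phi> ` K) #>\<^bsub>G Mod F\<^esub> Y) `
      (\<lambda>a. F #> a) ` K)"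
    using inert[unfolded left_inertial_def, rule_format, OF \<pi>.subgroup_img_is_subgroup[OF K]]
    by (simp only: ind)
  then obtain T where T: "finite T" "T \<subseteq> carrier G"
    "K \<subseteq> {x \<in> carrier G. F #> x \<in> (\<lambda>a. F #> a) ` K \<inter> (\<lambda>a. F #> a) ` \<phi> ` K} <#> T"
    by (rule \<pi>.finite_rcosets_image_lift_cover[OF \<pi>KK Kc subset_refl])
  obtain R where R: "finite R" "R \<subseteq> carrier G" "(F <#> K) \<inter> (F <#> \<phi> ` K) \<subseteq> R <#> (K \<inter> \<phi> ` K)"
    by (rule Int_set_mult_finite_cover[OF K \<phi>K F(2) Fc])
  have KKc: "K \<inter> \<phi> ` K \<subseteq> carrier G" using Kc by blast
  have "{x \<in> carrier G. F #> x \<in> (\<lambda>a. F #> a) ` K \<inter> (\<lambda>a. F #> a) ` \<phi> ` K}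
      \<subseteq> (F <#> K) \<inter> (F <#> \<phi> ` K)"
    using rcoset_preimage_subset[OF F(1), of K] rcoset_preimage_subset[OF F(1), of "\<phi> ` K"] by blast
  with R(3) have preimage: "{x \<in> carrier G. F #> x \<in> (\<lambda>a. F #> a) ` K \<inter> (\<lambda>a. F #> a) ` \<phi> ` K}
      \<subseteq> R <#> (K \<inter> \<phi> ` K)" by (rule order_trans[rotated])
  note T(3)
  also have "{x \<in> carrier G. F #> x \<in> (\<lambda>a. F #> a) ` K \<inter> (\<lambda>a. F #> a) ` \<phi> ` K} <#> T
      \<subseteq> (R <#> (K \<inter> \<phi> ` K)) <#> T"
    using preimage by (rule mono_set_mult) simp
  also have "\<dots> = (K \<inter> \<phi> ` K) <#> (R <#> T)"
    using set_mult_comm[OF R(2) KKc] set_mult_assoc[OF KKc R(2) T(2)] by simp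
  finally have cover: "K \<subseteq> (K \<inter> \<phi> ` K) <#> (R <#> T)" .
  have "finite (R <#> T)" using R(1) T(1) by (simp add: finite_set_mult)
  from finite_rcosets_image_if_cover[OF KK this set_mult_closed[OF R(2) T(2)] cover]
  show "finite ((\<lambda>y. (K \<inter> \<phi> ` K) #> y) ` K)" .
qed

theorem proposition2p3:
  fixes G :: "('a, 'b) monoid_scheme" and \<phi> :: "'a \<Rightarrow> 'a"
  assumes "comm_group G" and "\<phi> \<in> hom G G"
  shows
    "(((\<exists>A0. subgroup A0 G \<and> \<phi> ` A0 \<subseteq> A0 \<and> finite (rcosets\<^bsub>G\<^esub> A0)
              \<and> inertial (G\<lparr>carrier := A0\<rparr>) \<phi>)
      \<or> (\<exists>F. subgroup F G \<and> finite F \<and> \<phi> ` F \<subseteq> F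
              \<and> inertial (G Mod F) (induced_quot G F \<phi>)))
     \<longrightarrow> inertial G \<phi>)
    \<and>
    (((\<exists>A0. subgroup A0 G \<and> \<phi> ` A0 \<subseteq> A0 \<and> finite (rcosets\<^bsub>G\<^esub> A0)
              \<and> left_inertial (G\<lparr>carrier := A0\<rparr>) \<phi>)
      \<or> (\<exists>F. subgroup F G \<and> finite F \<and> \<phi> ` F \<subseteq> F
              \<and> left_inertial (G Mod F) (induced_quot G F \<phi>)))
     \<longrightarrow> left_inertial G \<phi>)"
proof -
  interpret comm_group G by (rule assms(1))
  show ?thesis
    using inertial_if_finite_index_inertial[OF assms(2)] inertial_if_inertial_mod_finite[OF assms(2)]
      left_inertial_if_finite_index_left_inertial[OF assms(2)]
      left_inertial_if_left_inertial_mod_finite[OF assms(2)]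
    by blast
qed

end
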